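(* Let $f\in\mathcal{A}$ satisfy $\operatorname{Re}\big((1-z^2)f'(z)\big)>0$ for all $z\in\mathbb{D}$ (i.e. $f\in\mathcal{F}_2$), and let $\gamma_1,\gamma_2,\gamma_3$ be its logarithmic coefficients. Then $$|H_{2,1}(F_f)|=|\gamma_1\gamma_3-\gamma_2^2|\le \tfrac14 .$$ The inequality is sharp: equality holds for $\tilde f(z)=\int_0^z \frac{1+t^2}{(1-t^2)^2}\,dt$, which satisfies $(1-z^2)\tilde f'(z)=\frac{1+z^2}{1-z^2}$ and hence lies in $\mathcal{F}_2$.
   Context: $\mathbb{D}=\{z\in\mathbb{C}:|z|<1\}$. $\mathcal{A}$ denotes the class of analytic functions $f$ on $\mathbb{D}$ of the form $f(z)=z+\sum_{n=2}^\infty a_n z^n$. $\mathcal{F}_2=\{f\in\mathcal{A}:\operatorname{Re}(1-z^2)f'(z)>0,\ z\in\mathbb{D}\}$. For such $f$ the logarithmic coefficients $\gamma_n$ are defined by $\log\frac{f(z)}{z}=2\sum_{n=1}^\infty\gamma_n z^n$ (with $\log1=0$); explicitly $\gamma_1=\tfrac12 a_2$, $\gamma_2=\tfrac12(a_3-\tfrac12 a_2^2)$, $\gamma_3=\tfrac14(a_4-a_2a_3+\tfrac13 a_2^3)$. $H_{2,1}(F_f)=\gamma_1\gamma_3-\gamma_2^2=\tfrac14\big(a_2a_4-a_3^2+\tfrac1{12}a_2^4\big)$. *)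

theory Defs
  imports "HOL-Analysis.Analysis"
begin

definition classA :: "(complex \<Rightarrow> complex) \<Rightarrow> bool" where
  "classA f \<longleftrightarrow> f holomorphic_on ball 0 1 \<and> f 0 = 0 \<and> deriv f 0 = 1"

definition classF2 :: "(complex \<Rightarrow> complex) \<Rightarrow> bool" where
  "classF2 f \<longleftrightarrow> classA f \<and> (\<forall>z\<in>ball 0 1. Re ((1 - z^2) * deriv f z) > 0)"

text \<open>Logarithmic coefficients: log(f(z)/z) = 2 * sum gamma_n z^n, with log 1 = 0.
  The quotient f(z)/z is extended by its value 1 at z = 0; near 0 it is close to 1,
  so the principal logarithm is the branch with log 1 = 0, and Taylor coefficients at 0
  only depend on the function near 0.\<close>
definition logcoeff :: "(complex \<Rightarrow> complex) \<Rightarrow> nat \<Rightarrow> complex" where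
  "logcoeff f n = (deriv ^^ n) (\<lambda>z. Ln (if z = 0 then 1 else f z / z)) 0 / (2 * fact n)"

definition H21 :: "(complex \<Rightarrow> complex) \<Rightarrow> complex" where
  "H21 f = logcoeff f 1 * logcoeff f 3 - (logcoeff f 2)^2"

end

theory Submission
  imports Defs "HOL-Complex_Analysis.Complex_Analysis"
begin

text \<open>Since \<open>Re ((1 - z\<^sup>2) f'(z)) > 0\<close>, the Cayley transform gives
  \<open>(1 - z\<^sup>2) f'(z) = (1 + z \<omega>(z)) / (1 - z \<omega>(z))\<close> for a holomorphic \<open>\<omega>\<close> with \<open>|\<omega>| \<le> 1\<close>
  (Schwarz lemma). Comparing coefficients expresses \<open>a\<^sub>2, a\<^sub>3, a\<^sub>4\<close> through the Taylor
  coefficients \<open>b\<^sub>0, b\<^sub>1, b\<^sub>2\<close> of \<open>\<omega>\<close>, and \<open>4 H\<^sub>2\<^sub>,\<^sub>1 = a\<^sub>2 a\<^sub>4 - a\<^sub>3\<^sup>2 + a\<^sub>2\<^sup>4/12\<close> becomes a polynomial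
  in them. The Schwarz--Pick inequalities \<open>|b\<^sub>1| \<le> 1 - |b\<^sub>0|\<^sup>2\<close> and
  \<open>|b\<^sub>2| \<le> 1 - |b\<^sub>0|\<^sup>2 - |b\<^sub>1|\<^sup>2/(1 + |b\<^sub>0|)\<close> together with the triangle inequality reduce the
  bound to an inequality between real polynomials. Equality holds for \<open>\<omega>(z) = z\<close>, i.e.
  \<open>f(z) = z/(1 - z\<^sup>2)\<close>.\<close>

lemma has_fps_expansion_nth_0_1:
  fixes g :: "complex \<Rightarrow> complex"
  assumes "g has_fps_expansion G"
  shows "fps_nth G 0 = g 0" "fps_nth G 1 = deriv g 0"
  using fps_nth_fps_expansion[OF assms, of 0] fps_nth_fps_expansion[OF assms, of 1] by simp_all

lemma holomorphic_on_ball_has_fps_expansion: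
  assumes "g holomorphic_on ball 0 r" "r > 0"
  shows "g has_fps_expansion fps_expansion g 0"
  using assms by (intro has_fps_expansion_fps_expansion[OF open_ball]) simp_all

lemma has_fps_expansion_eq_on_open:
  fixes f g :: "complex \<Rightarrow> complex"
  assumes "open S" "0 \<in> S" "\<And>z. z \<in> S \<Longrightarrow> f z = g z"
    and "f has_fps_expansion F" "g has_fps_expansion G"
  shows "F = G"
proof -
  have "eventually (\<lambda>z. f z = g z) (nhds 0)"
    using assms(1-3) by (intro eventually_nhds_in_open[THEN eventually_mono, of S]) auto
  then have "g has_fps_expansion F"
    using has_fps_expansion_cong assms(4) by blast
  then show ?thesis
    using fps_expansion_unique_complex assms(5) by blast
qed

lemma disc_self_map_constant_or_interior:
  assumes hol: "g holomorphic_on ball 0 1" and bd: "\<And>z. z \<in> ball 0 1 \<Longrightarrow> norm (g z) \<le> 1"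
  obtains c where "norm c = 1" "\<And>z. z \<in> ball 0 1 \<Longrightarrow> g z = c"
    | "\<And>z. z \<in> ball 0 1 \<Longrightarrow> norm (g z) < 1"
proof (cases "\<exists>\<xi>\<in>ball 0 1. norm (g \<xi>) = 1")
  case True
  then obtain \<xi> where \<xi>: "\<xi> \<in> ball 0 1" "norm (g \<xi>) = 1" by blast
  have "g constant_on ball 0 1"
    by (rule maximum_modulus_principle[OF hol _ _ _ subset_refl \<xi>(1)]) (use bd \<xi> in auto)
  then obtain c where "\<And>z. z \<in> ball 0 1 \<Longrightarrow> g z = c"
    unfolding constant_on_def by blast
  with \<xi> that(1) show ?thesis by metis
next
  case False
  with bd that(2) show ?thesis by (meson less_le)
qed

lemma Schwarz_quotient:
  assumes hol: "\<phi> holomorphic_on ball 0 1" and "\<phi> 0 = 0"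
    and lt1: "\<And>z. norm z < 1 \<Longrightarrow> norm (\<phi> z) < 1"
  obtains \<psi> where "\<psi> holomorphic_on ball 0 1" "\<And>z. norm z < 1 \<Longrightarrow> \<phi> z = z * \<psi> z"
    "\<And>z. z \<in> ball 0 1 \<Longrightarrow> norm (\<psi> z) \<le> 1"
proof -
  obtain \<psi> where hol\<psi>: "\<psi> holomorphic_on ball 0 1" and \<phi>\<psi>: "\<And>z. norm z < 1 \<Longrightarrow> \<phi> z = z * \<psi> z"
    and \<psi>0: "deriv \<phi> 0 = \<psi> 0"
    using Schwarz3[OF hol \<open>\<phi> 0 = 0\<close>] by blast
  have "norm (\<psi> z) \<le> 1" if "z \<in> ball 0 1" for z
  proof (cases "z = 0")
    case True
    then show ?thesis using Schwarz_Lemma(2)[OF hol \<open>\<phi> 0 = 0\<close> lt1, of 0] \<psi>0 by simp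
  next
    case False
    have "norm z * norm (\<psi> z) \<le> norm z * 1"
      using Schwarz_Lemma(1)[OF hol \<open>\<phi> 0 = 0\<close> lt1, of z] \<phi>\<psi>[of z] that by (simp add: norm_mult)
    with False show ?thesis by simp
  qed
  with that hol\<psi> \<phi>\<psi> show ?thesis by blast
qed

text \<open>Composing with the disc automorphism sending \<open>g 0\<close> to \<open>0\<close> and dividing by \<open>z\<close>.\<close>

lemma Schwarz_Pick_factorisation:
  assumes hol: "g holomorphic_on ball 0 1" and lt1: "\<And>z. z \<in> ball 0 1 \<Longrightarrow> norm (g z) < 1"
  obtains \<psi> where "\<psi> holomorphic_on ball 0 1" "\<And>z. z \<in> ball 0 1 \<Longrightarrow> norm (\<psi> z) \<le> 1"
    "\<And>z. z \<in> ball 0 1 \<Longrightarrow> z * \<psi> z * (1 - cnj (g 0) * g z) = g z - g 0"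
proof -
  define a where "a = g 0"
  have a1: "norm a < 1"
    using lt1[of 0] by (simp add: a_def)
  define \<phi> where "\<phi> z = Moebius_function 0 a (g z)" for z
  have hol\<phi>: "\<phi> holomorphic_on ball 0 1"
    unfolding \<phi>_def
    by (rule holomorphic_on_compose_gen[OF hol Moebius_function_holomorphic[OF a1], unfolded o_def])
       (use lt1 in auto)
  have "\<phi> 0 = 0"
    by (simp add: \<phi>_def a_def Moebius_function_eq_zero)
  moreover have "norm (\<phi> z) < 1" if "norm z < 1" for z
    unfolding \<phi>_def using Moebius_function_norm_lt_1[OF a1] lt1 that by simp
  ultimately obtain \<psi> where hol\<psi>: "\<psi> holomorphic_on ball 0 1"
    and \<phi>\<psi>: "\<And>z. norm z < 1 \<Longrightarrow> \<phi> z = z * \<psi> z" and bd\<psi>: "\<And>z. z \<in> ball 0 1 \<Longrightarrow> norm (\<psi> z) \<le> 1"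
    using Schwarz_quotient[OF hol\<phi>] by blast
  have "z * \<psi> z * (1 - cnj a * g z) = g z - a" if "z \<in> ball 0 1" for z
  proof -
    have "norm (cnj a * g z) < 1"
      using norm_mult_less[of "cnj a" 1 "g z" 1] a1 lt1[OF that] by simp
    then have "1 - cnj a * g z \<noteq> 0" by auto
    with \<phi>\<psi>[of z, symmetric] that show ?thesis
      by (simp add: \<phi>_def Moebius_function_simple field_simps)
  qed
  with that hol\<psi> bd\<psi> show ?thesis
    unfolding a_def by blast
qed

text \<open>In the degenerate case of a unimodular constant both coefficients vanish and any \<open>\<psi>\<close>
  will do.\<close>

lemma Schwarz_Pick_coefficients:
  fixes g :: "complex \<Rightarrow> complex"
  assumes hol: "g holomorphic_on ball 0 1" and bd: "\<And>z. z \<in> ball 0 1 \<Longrightarrow> norm (g z) \<le> 1"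
    and G: "g has_fps_expansion G"
  defines "a \<equiv> fps_nth G 0"
  obtains \<psi> \<Psi> where "\<psi> holomorphic_on ball 0 1" "\<And>z. z \<in> ball 0 1 \<Longrightarrow> norm (\<psi> z) \<le> 1"
    "\<psi> has_fps_expansion \<Psi>"
    "fps_nth G 1 = (1 - cnj a * a) * fps_nth \<Psi> 0"
    "fps_nth G 2 = (1 - cnj a * a) * (fps_nth \<Psi> 1 - cnj a * fps_nth \<Psi> 0 ^ 2)"
proof -
  have a: "a = g 0"
    using has_fps_expansion_nth_0_1(1)[OF G] by (simp add: a_def)
  consider c where "norm c = 1" "\<And>z. z \<in> ball 0 1 \<Longrightarrow> g z = c"
    | "\<And>z. z \<in> ball 0 1 \<Longrightarrow> norm (g z) < 1"
    using disc_self_map_constant_or_interior[OF hol bd] by blast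
  then show ?thesis
  proof cases
    case (1 c)
    have "G = fps_const c"
      by (rule has_fps_expansion_eq_on_open[OF open_ball[of 0 1] _ _ G, where g = "\<lambda>_. c"])
         (use 1 in auto)
    moreover have "cnj a * a = 1"
      using 1 a by (simp add: complex_norm_square[symmetric] mult.commute)
    ultimately show ?thesis
      using that[of "\<lambda>_. 0" 0] by simp
  next
    case 2
    then obtain \<psi> where hol\<psi>: "\<psi> holomorphic_on ball 0 1"
      and bd\<psi>: "\<And>z. z \<in> ball 0 1 \<Longrightarrow> norm (\<psi> z) \<le> 1"
      and eq\<psi>: "\<And>z. z \<in> ball 0 1 \<Longrightarrow> z * \<psi> z * (1 - cnj a * g z) = g z - a"
      using Schwarz_Pick_factorisation[OF hol] unfolding a by metis
    define \<Psi> where "\<Psi> = fps_expansion \<psi> 0"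
    have \<Psi>: "\<psi> has_fps_expansion \<Psi>"
      unfolding \<Psi>_def by (rule holomorphic_on_ball_has_fps_expansion[OF hol\<psi>]) simp
    have "(\<lambda>z. z * \<psi> z * (1 - cnj a * g z)) has_fps_expansion fps_X * \<Psi> * (1 - fps_const (cnj a) * G)"
      by (intro fps_expansion_intros \<Psi> G)
    moreover have "(\<lambda>z. g z - a) has_fps_expansion G - fps_const a"
      by (intro fps_expansion_intros G)
    ultimately have eq: "fps_X * \<Psi> * (1 - fps_const (cnj a) * G) = G - fps_const a"
      using eq\<psi> by (intro has_fps_expansion_eq_on_open[OF open_ball[of 0 1]]) simp_all
    have G1: "fps_nth G 1 = (1 - cnj a * a) * fps_nth \<Psi> 0"
      using arg_cong[OF eq, of "\<lambda>F. fps_nth F 1"]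
      by (simp add: fps_mult_nth atLeast0AtMost numeral_2_eq_2 a_def fps_X_mult_nth mult_ac)
    have "fps_nth G 2 = (1 - cnj a * a) * fps_nth \<Psi> 1 - cnj a * fps_nth G 1 * fps_nth \<Psi> 0"
      using arg_cong[OF eq, of "\<lambda>F. fps_nth F 2"]
      by (simp add: fps_mult_nth atLeast0AtMost numeral_2_eq_2 a_def fps_X_mult_nth algebra_simps)
    then have "fps_nth G 2 = (1 - cnj a * a) * (fps_nth \<Psi> 1 - cnj a * fps_nth \<Psi> 0 ^ 2)"
      unfolding G1 by (simp add: algebra_simps power2_eq_square)
    with that hol\<psi> bd\<psi> \<Psi> G1 show ?thesis by blast
  qed
qed

lemma one_minus_cnj_mult_self: "1 - cnj a * a = complex_of_real (1 - norm a ^ 2)"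
  using complex_norm_square[of a] by (simp add: mult.commute)

lemma Schwarz_Pick_coefficient_1:
  fixes g :: "complex \<Rightarrow> complex"
  assumes hol: "g holomorphic_on ball 0 1" and bd: "\<And>z. z \<in> ball 0 1 \<Longrightarrow> norm (g z) \<le> 1"
    and G: "g has_fps_expansion G"
  shows "norm (fps_nth G 1) \<le> 1 - norm (fps_nth G 0) ^ 2"
proof -
  obtain \<psi> \<Psi> where bd\<psi>: "\<And>z. z \<in> ball 0 1 \<Longrightarrow> norm (\<psi> z) \<le> 1" and \<Psi>: "\<psi> has_fps_expansion \<Psi>"
    and G1: "fps_nth G 1 = (1 - cnj (fps_nth G 0) * fps_nth G 0) * fps_nth \<Psi> 0"
    using Schwarz_Pick_coefficients[OF hol bd G] by metis
  have "norm (fps_nth \<Psi> 0) \<le> 1"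
    using bd\<psi>[of 0] has_fps_expansion_nth_0_1(1)[OF \<Psi>] by simp
  moreover have "norm (fps_nth G 0) \<le> 1"
    using bd[of 0] has_fps_expansion_nth_0_1(1)[OF G] by simp
  ultimately show ?thesis
    unfolding G1 one_minus_cnj_mult_self norm_mult norm_of_real
    by (simp add: abs_square_le_1 mult_left_le)
qed

lemma Schwarz_Pick_coefficient_2:
  fixes g :: "complex \<Rightarrow> complex"
  assumes hol: "g holomorphic_on ball 0 1" and bd: "\<And>z. z \<in> ball 0 1 \<Longrightarrow> norm (g z) \<le> 1"
    and G: "g has_fps_expansion G"
  shows "norm (fps_nth G 2)
           \<le> 1 - norm (fps_nth G 0) ^ 2 - norm (fps_nth G 1) ^ 2 / (1 + norm (fps_nth G 0))"
proof -
  define a where "a = fps_nth G 0"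
  obtain \<psi> \<Psi> where hol\<psi>: "\<psi> holomorphic_on ball 0 1"
    and bd\<psi>: "\<And>z. z \<in> ball 0 1 \<Longrightarrow> norm (\<psi> z) \<le> 1" and \<Psi>: "\<psi> has_fps_expansion \<Psi>"
    and G1: "fps_nth G 1 = (1 - cnj a * a) * fps_nth \<Psi> 0"
    and G2: "fps_nth G 2 = (1 - cnj a * a) * (fps_nth \<Psi> 1 - cnj a * fps_nth \<Psi> 0 ^ 2)"
    using Schwarz_Pick_coefficients[OF hol bd G] unfolding a_def by metis
  define r where "r = norm a"
  define u where "u = norm (fps_nth \<Psi> 0)"
  define s where "s = 1 - r ^ 2"
  have "0 \<le> r" "r \<le> 1"
    using bd[of 0] has_fps_expansion_nth_0_1(1)[OF G] by (simp_all add: r_def a_def)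
  then have s: "0 \<le> s" "s = (1 - r) * (1 + r)"
    unfolding s_def by (simp_all add: mult_le_one algebra_simps power2_eq_square)
  have \<Psi>1: "norm (fps_nth \<Psi> 1) \<le> 1 - u ^ 2"
    using Schwarz_Pick_coefficient_1[OF hol\<psi> bd\<psi> \<Psi>] by (simp add: u_def)
  have "norm (fps_nth G 2) = s * norm (fps_nth \<Psi> 1 - cnj a * fps_nth \<Psi> 0 ^ 2)"
    unfolding G2 one_minus_cnj_mult_self norm_mult norm_of_real using s(1) by (simp add: s_def r_def)
  also have "\<dots> \<le> s * (norm (fps_nth \<Psi> 1) + r * u ^ 2)"
    using s(1) norm_triangle_ineq4[of "fps_nth \<Psi> 1" "cnj a * fps_nth \<Psi> 0 ^ 2"]
    by (intro mult_left_mono) (simp_all add: norm_mult norm_power r_def u_def)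
  also have "\<dots> \<le> s * (1 - u ^ 2 + r * u ^ 2)"
    using s(1) \<Psi>1 by (intro mult_left_mono) simp_all
  also have "\<dots> = s - (s * u) ^ 2 / (1 + r)"
  proof -
    have "(s * u) ^ 2 / (1 + r) = s * (1 - r) * u ^ 2"
      using \<open>0 \<le> r\<close> unfolding s(2) by (simp add: power2_eq_square)
    then show ?thesis by (simp add: algebra_simps)
  qed
  also have "(s * u) ^ 2 = norm (fps_nth G 1) ^ 2"
    unfolding G1 one_minus_cnj_mult_self norm_mult norm_of_real using s(1) by (simp add: s_def r_def u_def)
  finally show ?thesis by (simp add: s_def r_def a_def)
qed

lemma fps_log_derivative_coeffs:
  fixes L Q :: "'a::field_char_0 fps"
  assumes eq: "fps_deriv L * Q = fps_deriv Q" and Q0: "fps_nth Q 0 = 1"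
  shows "fps_nth L 1 = fps_nth Q 1"
    and "fps_nth L 2 = fps_nth Q 2 - fps_nth Q 1 ^ 2 / 2"
    and "fps_nth L 3 = fps_nth Q 3 - fps_nth Q 1 * fps_nth Q 2 + fps_nth Q 1 ^ 3 / 3"
proof -
  have c: "fps_nth (fps_deriv L * Q) n = fps_nth (fps_deriv Q) n" for n
    using eq by simp
  show L1: "fps_nth L 1 = fps_nth Q 1"
    using c[of 0] Q0 by (simp add: fps_mult_nth)
  have "fps_nth L 1 * fps_nth Q 1 + 2 * fps_nth L 2 = 2 * fps_nth Q 2"
    using c[of 1] Q0 by (simp add: fps_mult_nth atLeast0AtMost numeral_2_eq_2)
  then show L2: "fps_nth L 2 = fps_nth Q 2 - fps_nth Q 1 ^ 2 / 2"
    unfolding L1 by (simp add: field_simps power2_eq_square)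
  have "fps_nth L 1 * fps_nth Q 2 + 2 * fps_nth L 2 * fps_nth Q 1 + 3 * fps_nth L 3 = 3 * fps_nth Q 3"
    using c[of 2] Q0 by (simp add: fps_mult_nth atLeast0AtMost eval_nat_numeral algebra_simps)
  then have "3 * fps_nth L 3 = 3 * fps_nth Q 3 - 3 * fps_nth Q 1 * fps_nth Q 2 + fps_nth Q 1 ^ 3"
    unfolding L1 L2 by (simp add: algebra_simps power2_eq_square power3_eq_cube)
  then show "fps_nth L 3 = fps_nth Q 3 - fps_nth Q 1 * fps_nth Q 2 + fps_nth Q 1 ^ 3 / 3"
    by (simp add: field_simps)
qed

lemma has_fps_expansion_Re_pos_near_0:
  fixes q :: "complex \<Rightarrow> complex"
  assumes Q: "q has_fps_expansion Q" and "q 0 = 1"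
  obtains T where "open T" "0 \<in> T" "q holomorphic_on T" "\<And>z. z \<in> T \<Longrightarrow> Re (q z) > 0"
proof -
  obtain S where S: "open S" "0 \<in> S" "q holomorphic_on S"
    using has_fps_expansion_imp_holomorphic[OF Q] by blast
  define T where "T = S \<inter> q -` ball 1 1"
  have "open T" "0 \<in> T"
    unfolding T_def using S \<open>q 0 = 1\<close> holomorphic_on_imp_continuous_on
    by (auto intro!: continuous_open_preimage)
  moreover have "q holomorphic_on T"
    using S(3) by (rule holomorphic_on_subset) (auto simp: T_def)
  moreover have "Re (q z) > 0" if "z \<in> T" for z
  proof -
    have "dist 1 (q z) < 1" using that by (simp add: T_def)
    then show ?thesis using complex_Re_le_cmod[of "1 - q z"] by (simp add: dist_norm)
  qed
  ultimately show ?thesis using that by blast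
qed

lemma Ln_has_fps_expansion:
  fixes q :: "complex \<Rightarrow> complex"
  assumes Q: "q has_fps_expansion Q" and "q 0 = 1"
  obtains L where "(\<lambda>z. Ln (q z)) has_fps_expansion L" "fps_deriv L * Q = fps_deriv Q"
proof -
  obtain T where T: "open T" "0 \<in> T" and holT: "q holomorphic_on T"
    and Re_q: "\<And>z. z \<in> T \<Longrightarrow> Re (q z) > 0"
    using has_fps_expansion_Re_pos_near_0[OF assms] by blast
  have slit: "q z \<notin> \<real>\<^sub>\<le>\<^sub>0" if "z \<in> T" for z
    using Re_q[OF that] by (auto simp: complex_nonpos_Reals_iff)
  have hol: "(\<lambda>z. Ln (q z)) holomorphic_on T"
    using slit holT by (intro holomorphic_intros) auto
  define L where "L = fps_expansion (\<lambda>z. Ln (q z)) 0"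
  have L: "(\<lambda>z. Ln (q z)) has_fps_expansion L"
    unfolding L_def by (rule has_fps_expansion_fps_expansion[OF T hol])
  have "deriv (\<lambda>z. Ln (q z)) z * q z = deriv q z" if "z \<in> T" for z
  proof -
    have "(q has_field_derivative deriv q z) (at z)"
      using holT T that by (intro holomorphic_derivI[of _ T]) auto
    then have "((\<lambda>z. Ln (q z)) has_field_derivative inverse (q z) * deriv q z) (at z)"
      using has_field_derivative_Ln[OF slit[OF that]] by (rule DERIV_chain2[rotated])
    moreover have "q z \<noteq> 0" using slit[OF that] by auto
    ultimately show ?thesis by (simp add: DERIV_imp_deriv field_simps)
  qed
  moreover have "(\<lambda>z. deriv (\<lambda>z. Ln (q z)) z * q z) has_fps_expansion fps_deriv L * Q"
    by (intro fps_expansion_intros L Q)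
  moreover have "deriv q has_fps_expansion fps_deriv Q"
    by (intro fps_expansion_intros Q)
  ultimately have "fps_deriv L * Q = fps_deriv Q"
    by (intro has_fps_expansion_eq_on_open[OF T])
  with L that show ?thesis by blast
qed

lemma H21_eq_Taylor_coefficients:
  assumes "classA f"
  defines "A \<equiv> fps_expansion f 0"
  shows "H21 f = (fps_nth A 2 * fps_nth A 4 - fps_nth A 3 ^ 2 + fps_nth A 2 ^ 4 / 12) / 4"
proof -
  have hol: "f holomorphic_on ball 0 1" and "f 0 = 0" "deriv f 0 = 1"
    using assms(1) by (auto simp: classA_def)
  have fA: "f has_fps_expansion A"
    unfolding A_def by (rule holomorphic_on_ball_has_fps_expansion[OF hol]) simp
  have A0: "fps_nth A 0 = 0" and A1: "fps_nth A 1 = 1"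
    using has_fps_expansion_nth_0_1[OF fA] \<open>f 0 = 0\<close> \<open>deriv f 0 = 1\<close> by simp_all
  have sub: "1 \<le> subdegree A"
    using A0 A1 by (intro subdegree_geI) auto
  have Q: "(\<lambda>z. if z = 0 then 1 else f z / z) has_fps_expansion fps_shift 1 A"
    using has_fps_expansion_shift[OF fA sub refl] unfolding A1 power_one_right .
  obtain L where L: "(\<lambda>z. Ln (if z = 0 then 1 else f z / z)) has_fps_expansion L"
    and ode: "fps_deriv L * fps_shift 1 A = fps_deriv (fps_shift 1 A)"
    using Ln_has_fps_expansion[OF Q] by auto
  have lc: "logcoeff f n = fps_nth L n / 2" for n
    unfolding logcoeff_def using fps_nth_fps_expansion[OF L, of n] by simp
  have "fps_nth (fps_shift 1 A) 0 = 1"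
    using A1 by simp
  note L_coeffs = fps_log_derivative_coeffs[OF ode this]
  have L123: "fps_nth L 1 = fps_nth A 2" "fps_nth L 2 = fps_nth A 3 - fps_nth A 2 ^ 2 / 2"
    "fps_nth L 3 = fps_nth A 4 - fps_nth A 2 * fps_nth A 3 + fps_nth A 2 ^ 3 / 3"
    using L_coeffs by (simp_all add: eval_nat_numeral)
  show ?thesis
    unfolding H21_def lc L123 by (simp add: field_simps power2_eq_square power3_eq_cube power4_eq_xxxx)
qed

text \<open>For the largest admissible \<open>z\<close>, multiplying by \<open>36 (1 + x)\<close> turns the claim into the nonnegativity
  on \<open>[0, 1 - x\<^sup>2]\<close> of a quadratic polynomial \<open>P\<close> in \<open>y\<close> with leading coefficient
  \<open>2 x - 16 < 0\<close>; by concavity it suffices to check the two endpoints.\<close>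

lemma Hankel_majorant_le_1:
  fixes x y z :: real
  assumes x: "0 \<le> x" "x \<le> 1" and y: "0 \<le> y" "y \<le> 1 - x ^ 2"
    and z: "z \<le> 1 - x ^ 2 - y ^ 2 / (1 + x)"
  shows "x * z / 2 + x ^ 2 * y / 9 + 5 * x ^ 4 / 36 + x ^ 2 / 18 + 4 * y ^ 2 / 9 + 4 * y / 9 + 1 / 9 \<le> 1"
proof -
  define t where "t = 1 - x ^ 2"
  define P where "P y = 36 * (1 + x) - 18 * x * ((1 - x ^ 2) * (1 + x) - y ^ 2)
    - (1 + x) * (4 * x ^ 2 * y + 5 * x ^ 4 + 2 * x ^ 2 + 16 * y ^ 2 + 16 * y + 4)" for y
  have "x ^ 2 \<le> 1" "x ^ 3 \<ge> 0" "x ^ 4 \<le> 1"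
    using x by (simp_all add: power_le_one)
  then have "32 - 18 * x + 18 * x ^ 3 - 5 * x ^ 4 - 2 * x ^ 2 \<ge> 0"
    using x by linarith
  moreover have "P 0 = (1 + x) * (32 - 18 * x + 18 * x ^ 3 - 5 * x ^ 4 - 2 * x ^ 2)"
    unfolding P_def by (simp add: algebra_simps power2_eq_square power3_eq_cube power4_eq_xxxx)
  ultimately have P0: "P 0 \<ge> 0"
    using x by simp
  have "P t = (1 + x) * (24 * x ^ 2 + x ^ 4)"
    unfolding P_def t_def by (simp add: algebra_simps power2_eq_square power3_eq_cube power4_eq_xxxx)
  then have Pt: "P t \<ge> 0"
    using x by simp
  have "t * P y = (t - y) * P 0 + y * P t + (16 - 2 * x) * t * y * (t - y)"
    unfolding P_def t_def by (simp add: algebra_simps power2_eq_square power3_eq_cube power4_eq_xxxx)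
  also have "\<dots> \<ge> 0"
    using P0 Pt x y by (simp add: t_def)
  finally have tP: "t * P y \<ge> 0" .
  have Py: "P y \<ge> 0"
  proof (cases "t = 0")
    case True
    then have "y = 0" using y by (simp add: t_def)
    then show ?thesis using P0 by simp
  next
    case False
    moreover have "t \<ge> 0" using x by (simp add: t_def power_le_one)
    ultimately show ?thesis using tP by (simp add: zero_le_mult_iff)
  qed
  define w where "w = 1 - x ^ 2 - y ^ 2 / (1 + x)"
  have "x * w / 2 + x ^ 2 * y / 9 + 5 * x ^ 4 / 36 + x ^ 2 / 18 + 4 * y ^ 2 / 9 + 4 * y / 9 + 1 / 9 \<le> 1"
    using Py x unfolding P_def w_def by (simp add: field_simps)
  moreover have "x * z \<le> x * w"
    using x z by (simp add: w_def mult_left_mono)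
  ultimately show ?thesis by linarith
qed

lemma norm_Hankel_expression_le_1:
  fixes b0 b1 b2 :: complex
  assumes "norm b0 \<le> 1" "norm b1 \<le> 1 - norm b0 ^ 2"
    and "norm b2 \<le> 1 - norm b0 ^ 2 - norm b1 ^ 2 / (1 + norm b0)"
  shows "norm (b0 * b2 / 2 + b0 ^ 2 * b1 / 9 + 5 * b0 ^ 4 / 36 + b0 ^ 2 / 18
                - 4 * b1 ^ 2 / 9 - 4 * b1 / 9 - 1 / 9) \<le> 1"
proof -
  have "norm (b0 * b2 / 2 + b0 ^ 2 * b1 / 9 + 5 * b0 ^ 4 / 36 + b0 ^ 2 / 18
                - 4 * b1 ^ 2 / 9 - 4 * b1 / 9 - 1 / 9)
      \<le> norm (b0 * b2 / 2) + norm (b0 ^ 2 * b1 / 9) + norm (5 * b0 ^ 4 / 36) + norm (b0 ^ 2 / 18)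
         + norm (4 * b1 ^ 2 / 9) + norm (4 * b1 / 9) + norm (1 / 9 :: complex)"
    by (smt (verit) norm_triangle_ineq norm_triangle_ineq4)
  also have "\<dots> = norm b0 * norm b2 / 2 + norm b0 ^ 2 * norm b1 / 9 + 5 * norm b0 ^ 4 / 36
      + norm b0 ^ 2 / 18 + 4 * norm b1 ^ 2 / 9 + 4 * norm b1 / 9 + 1 / 9"
    by (simp add: norm_mult norm_divide norm_power)
  also have "\<dots> \<le> 1"
    by (rule Hankel_majorant_le_1) (use assms in auto)
  finally show ?thesis .
qed

lemma norm_Cayley_less_1:
  fixes p :: complex
  assumes "Re p > 0"
  shows "norm ((p - 1) / (p + 1)) < 1"
proof -
  have "norm (p - 1) ^ 2 < norm (p + 1) ^ 2"
    unfolding cmod_power2 using assms by (simp add: power2_eq_square algebra_simps)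
  then have "norm (p - 1) < norm (p + 1)"
    using power2_less_imp_less by fastforce
  moreover have "p + 1 \<noteq> 0"
    using assms by (auto simp: complex_eq_iff)
  ultimately show ?thesis
    by (simp add: norm_divide divide_less_eq)
qed

lemma Re_Cayley_pos:
  fixes u :: complex
  assumes "norm u < 1"
  shows "Re ((1 + u) / (1 - u)) > 0"
proof -
  have "Re u ^ 2 + Im u ^ 2 < 1"
    using assms by (simp add: cmod_power2[symmetric] power_less_one_iff abs_square_less_1)
  then have "Re (1 + u) * Re (1 - u) + Im (1 + u) * Im (1 - u) > 0"
    by (simp add: power2_eq_square algebra_simps)
  moreover have "cmod (1 - u) ^ 2 > 0"
    using assms by auto
  ultimately show ?thesis
    by (simp add: Re_divide cmod_power2)
qed

lemma Cayley_equation_coefficients: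
  fixes A \<Omega> :: "'a::field_char_0 fps"
  assumes eq: "(1 - fps_X ^ 2) * fps_deriv A * (1 - fps_X * \<Omega>) = 1 + fps_X * \<Omega>"
    and A1: "fps_nth A 1 = 1"
  shows "fps_nth A 2 = fps_nth \<Omega> 0"
    and "fps_nth A 3 = (2 * fps_nth \<Omega> 1 + 2 * fps_nth \<Omega> 0 ^ 2 + 1) / 3"
    and "fps_nth A 4 = (2 * fps_nth \<Omega> 2 + 4 * fps_nth \<Omega> 0 * fps_nth \<Omega> 1
                         + 2 * fps_nth \<Omega> 0 ^ 3 + 2 * fps_nth \<Omega> 0) / 4"
proof -
  define P where "P = (1 - fps_X ^ 2) * fps_deriv A"
  have c: "fps_nth (P * (1 - fps_X * \<Omega>)) n = fps_nth (1 + fps_X * \<Omega>) n" for n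
    using eq by (simp add: P_def)
  have P: "fps_nth P 0 = 1" "fps_nth P 1 = 2 * fps_nth A 2" "fps_nth P 2 = 3 * fps_nth A 3 - 1"
    "fps_nth P 3 = 4 * fps_nth A 4 - 2 * fps_nth A 2"
    using A1 by (simp_all add: P_def algebra_simps fps_X_power_mult_nth eval_nat_numeral)
  show A2: "fps_nth A 2 = fps_nth \<Omega> 0"
    using c[of 1] P by (simp add: fps_mult_nth atLeast0AtMost fps_X_mult_nth)
  show A3: "fps_nth A 3 = (2 * fps_nth \<Omega> 1 + 2 * fps_nth \<Omega> 0 ^ 2 + 1) / 3"
    using c[of 2] P A2
    by (simp add: fps_mult_nth atLeast0AtMost fps_X_mult_nth eval_nat_numeral field_simps power2_eq_square)
  show "fps_nth A 4 = (2 * fps_nth \<Omega> 2 + 4 * fps_nth \<Omega> 0 * fps_nth \<Omega> 1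
                         + 2 * fps_nth \<Omega> 0 ^ 3 + 2 * fps_nth \<Omega> 0) / 4"
    using c[of 3] P A2 A3
    by (simp add: fps_mult_nth atLeast0AtMost fps_X_mult_nth eval_nat_numeral field_simps
        power2_eq_square power3_eq_cube)
qed

text \<open>The power series identity is \<open>(1 - z\<^sup>2) f'(z) = (1 + z \<omega>(z)) / (1 - z \<omega>(z))\<close> with
  denominators cleared.\<close>

lemma classF2_Schwarz_function:
  assumes "classF2 f"
  defines "A \<equiv> fps_expansion f 0"
  obtains \<omega> \<Omega> where "\<omega> holomorphic_on ball 0 1" "\<And>z. z \<in> ball 0 1 \<Longrightarrow> norm (\<omega> z) \<le> 1"
    "\<omega> has_fps_expansion \<Omega>"
    "(1 - fps_X ^ 2) * fps_deriv A * (1 - fps_X * \<Omega>) = 1 + fps_X * \<Omega>"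
proof -
  define p where "p z = (1 - z ^ 2) * deriv f z" for z
  have hol: "f holomorphic_on ball 0 1" and "deriv f 0 = 1"
    and Re_p: "\<And>z. z \<in> ball 0 1 \<Longrightarrow> Re (p z) > 0"
    using assms(1) by (auto simp: classF2_def classA_def p_def)
  have p1: "p z + 1 \<noteq> 0" if "z \<in> ball 0 1" for z
    using Re_p[OF that] by (auto simp: complex_eq_iff)
  define w where "w z = (p z - 1) / (p z + 1)" for z
  have "w holomorphic_on ball 0 1"
    unfolding w_def p_def using p1 by (intro holomorphic_intros hol) (auto simp: p_def)
  moreover have "w 0 = 0"
    by (simp add: w_def p_def \<open>deriv f 0 = 1\<close>)
  moreover have "norm (w z) < 1" if "norm z < 1" for z
    unfolding w_def using norm_Cayley_less_1 Re_p that by simp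
  ultimately obtain \<omega> where hol\<omega>: "\<omega> holomorphic_on ball 0 1"
    and w\<omega>: "\<And>z. norm z < 1 \<Longrightarrow> w z = z * \<omega> z" and bd\<omega>: "\<And>z. z \<in> ball 0 1 \<Longrightarrow> norm (\<omega> z) \<le> 1"
    using Schwarz_quotient by metis
  define \<Omega> where "\<Omega> = fps_expansion \<omega> 0"
  have \<Omega>: "\<omega> has_fps_expansion \<Omega>"
    unfolding \<Omega>_def by (rule holomorphic_on_ball_has_fps_expansion[OF hol\<omega>]) simp
  have fA: "f has_fps_expansion A"
    unfolding A_def by (rule holomorphic_on_ball_has_fps_expansion[OF hol]) simp
  have "(1 - z ^ 2) * deriv f z * (1 - z * \<omega> z) = 1 + z * \<omega> z" if "z \<in> ball 0 1" for z
    using w\<omega>[of z, symmetric] p1[OF that] that by (simp add: w_def p_def field_simps)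
  moreover have "(\<lambda>z. (1 - z ^ 2) * deriv f z * (1 - z * \<omega> z))
                   has_fps_expansion (1 - fps_X ^ 2) * fps_deriv A * (1 - fps_X * \<Omega>)"
    by (intro fps_expansion_intros fA \<Omega>)
  moreover have "(\<lambda>z. 1 + z * \<omega> z) has_fps_expansion 1 + fps_X * \<Omega>"
    by (intro fps_expansion_intros \<Omega>)
  ultimately have "(1 - fps_X ^ 2) * fps_deriv A * (1 - fps_X * \<Omega>) = 1 + fps_X * \<Omega>"
    by (intro has_fps_expansion_eq_on_open[OF open_ball[of 0 1]]) simp_all
  with that hol\<omega> bd\<omega> \<Omega> show ?thesis by blast
qed

lemma classF2_Taylor_bound:
  assumes "classF2 f"
  defines "A \<equiv> fps_expansion f 0"
  shows "norm (fps_nth A 2 * fps_nth A 4 - fps_nth A 3 ^ 2 + fps_nth A 2 ^ 4 / 12) \<le> 1"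
proof -
  obtain \<omega> \<Omega> where hol\<omega>: "\<omega> holomorphic_on ball 0 1"
    and bd\<omega>: "\<And>z. z \<in> ball 0 1 \<Longrightarrow> norm (\<omega> z) \<le> 1" and \<Omega>: "\<omega> has_fps_expansion \<Omega>"
    and eq: "(1 - fps_X ^ 2) * fps_deriv A * (1 - fps_X * \<Omega>) = 1 + fps_X * \<Omega>"
    using classF2_Schwarz_function[OF assms(1)] unfolding A_def by metis
  have "f holomorphic_on ball 0 1" "deriv f 0 = 1"
    using assms(1) by (auto simp: classF2_def classA_def)
  then have "fps_nth A 1 = 1"
    unfolding A_def using holomorphic_on_ball_has_fps_expansion has_fps_expansion_nth_0_1(2)
    by (metis zero_less_one)
  note A = Cayley_equation_coefficients[OF eq this]
  have "fps_nth A 2 * fps_nth A 4 - fps_nth A 3 ^ 2 + fps_nth A 2 ^ 4 / 12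
      = fps_nth \<Omega> 0 * fps_nth \<Omega> 2 / 2 + fps_nth \<Omega> 0 ^ 2 * fps_nth \<Omega> 1 / 9
        + 5 * fps_nth \<Omega> 0 ^ 4 / 36 + fps_nth \<Omega> 0 ^ 2 / 18
        - 4 * fps_nth \<Omega> 1 ^ 2 / 9 - 4 * fps_nth \<Omega> 1 / 9 - 1 / 9"
    unfolding A by (simp add: field_simps power2_eq_square power3_eq_cube power4_eq_xxxx)
  also have "norm \<dots> \<le> 1"
  proof (rule norm_Hankel_expression_le_1)
    show "norm (fps_nth \<Omega> 0) \<le> 1"
      using bd\<omega>[of 0] has_fps_expansion_nth_0_1(1)[OF \<Omega>] by simp
  next
    show "norm (fps_nth \<Omega> 1) \<le> 1 - norm (fps_nth \<Omega> 0) ^ 2"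
      by (rule Schwarz_Pick_coefficient_1[OF hol\<omega> bd\<omega> \<Omega>])
  next
    show "norm (fps_nth \<Omega> 2)
            \<le> 1 - norm (fps_nth \<Omega> 0) ^ 2 - norm (fps_nth \<Omega> 1) ^ 2 / (1 + norm (fps_nth \<Omega> 0))"
      by (rule Schwarz_Pick_coefficient_2[OF hol\<omega> bd\<omega> \<Omega>])
  qed
  finally show ?thesis .
qed

lemma one_minus_square_nonzero:
  fixes z :: complex
  assumes "norm z < 1"
  shows "1 - z ^ 2 \<noteq> 0"
proof -
  have "norm (z ^ 2) < 1"
    using assms by (simp add: norm_power power_less_one_iff abs_square_less_1)
  then show ?thesis by auto
qed

definition F2_extremal :: "complex \<Rightarrow> complex" where
  "F2_extremal z = z / (1 - z ^ 2)"

lemma F2_extremal_deriv: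
  assumes "z \<in> ball 0 1"
  shows "(1 - z ^ 2) * deriv F2_extremal z = (1 + z ^ 2) / (1 - z ^ 2)"
proof -
  have nz: "1 - z ^ 2 \<noteq> 0"
    by (rule one_minus_square_nonzero) (use assms in simp)
  have "(F2_extremal has_field_derivative (1 + z ^ 2) / (1 - z ^ 2) ^ 2) (at z)"
    unfolding F2_extremal_def[abs_def] using nz
    by (auto intro!: derivative_eq_intros simp: power2_eq_square algebra_simps)
  then show ?thesis
    using nz by (simp add: DERIV_imp_deriv power2_eq_square)
qed

lemma classF2_F2_extremal: "classF2 F2_extremal"
proof -
  have "F2_extremal holomorphic_on ball 0 1"
    unfolding F2_extremal_def[abs_def] by (intro holomorphic_intros one_minus_square_nonzero) simp
  moreover have "Re ((1 - z ^ 2) * deriv F2_extremal z) > 0" if "z \<in> ball 0 1" for z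
    unfolding F2_extremal_deriv[OF that] using that
    by (intro Re_Cayley_pos) (simp add: norm_power power_less_one_iff abs_square_less_1)
  moreover have "deriv F2_extremal 0 = 1"
    using F2_extremal_deriv[of 0] by simp
  ultimately show ?thesis
    by (simp add: classF2_def classA_def F2_extremal_def)
qed

lemma H21_F2_extremal: "H21 F2_extremal = - 1 / 4"
proof -
  define A where "A = fps_expansion F2_extremal 0"
  have hol: "F2_extremal holomorphic_on ball 0 1" and cA: "classA F2_extremal"
    using classF2_F2_extremal by (auto simp: classF2_def classA_def)
  have fA: "F2_extremal has_fps_expansion A"
    unfolding A_def by (rule holomorphic_on_ball_has_fps_expansion[OF hol]) simp
  have "F2_extremal z * (1 - z ^ 2) = z" if "z \<in> ball 0 1" for z
    using that one_minus_square_nonzero[of z] by (simp add: F2_extremal_def)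
  moreover have "(\<lambda>z. F2_extremal z * (1 - z ^ 2)) has_fps_expansion A * (1 - fps_X ^ 2)"
    by (intro fps_expansion_intros fA)
  moreover have "(\<lambda>z. z) has_fps_expansion fps_X"
    by (intro fps_expansion_intros)
  ultimately have AX: "A * (1 - fps_X ^ 2) = fps_X"
    by (intro has_fps_expansion_eq_on_open[OF open_ball[of 0 1]]) simp_all
  have "fps_nth A 0 = 0" "fps_nth A 1 = 1"
    using has_fps_expansion_nth_0_1[OF fA] cA by (simp_all add: classA_def)
  then have "fps_nth A 2 = 0" "fps_nth A 3 = 1" "fps_nth A 4 = 0"
    using arg_cong[OF AX, of "\<lambda>F. fps_nth F 2"] arg_cong[OF AX, of "\<lambda>F. fps_nth F 3"]
      arg_cong[OF AX, of "\<lambda>F. fps_nth F 4"]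
    by (simp_all add: algebra_simps fps_X_power_mult_right_nth)
  then show ?thesis
    using H21_eq_Taylor_coefficients[OF cA] by (simp add: A_def)
qed

theorem theorem2p2:
  shows "(\<forall>f. classF2 f \<longrightarrow> cmod (H21 f) \<le> 1/4) \<and>
         (\<exists>f. classF2 f \<and>
              (\<forall>z\<in>ball 0 1. (1 - z^2) * deriv f z = (1 + z^2) / (1 - z^2)) \<and>
              cmod (H21 f) = 1/4)"
proof (intro conjI allI impI)
  fix f :: "complex \<Rightarrow> complex"
  assume F2: "classF2 f"
  then have H: "H21 f = (fps_nth (fps_expansion f 0) 2 * fps_nth (fps_expansion f 0) 4
      - fps_nth (fps_expansion f 0) 3 ^ 2 + fps_nth (fps_expansion f 0) 2 ^ 4 / 12) / 4"
    by (intro H21_eq_Taylor_coefficients) (simp add: classF2_def)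
  show "cmod (H21 f) \<le> 1/4"
    unfolding H using classF2_Taylor_bound[OF F2] by (simp add: norm_divide)
next
  show "\<exists>f. classF2 f \<and> (\<forall>z\<in>ball 0 1. (1 - z^2) * deriv f z = (1 + z^2) / (1 - z^2))
          \<and> cmod (H21 f) = 1/4"
    using classF2_F2_extremal F2_extremal_deriv H21_F2_extremal by (intro exI[of _ F2_extremal]) simp
qed

end
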